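(* Let $S=\langle P,\varphi\rangle$ be a SUT model, $t$ a strength and $N\ge 1$ an integer. The propositional formula $Sat_{CCX}^{N,t,S}=X\wedge CCX\wedge SUTX$ (defined in the context) is satisfiable if and only if a covering array $CA(N;t,S)$ exists.
   Context: A SUT model is $S=\langle P,\varphi\rangle$, where $P$ is a finite set of parameters, each $p\in P$ having a finite nonempty domain $d(p)$, and $\varphi$ is a propositional formula whose atoms have the form $(p=v)$ with $p\in P$, $v\in d(p)$. A test case is a full assignment $A$ giving each $p\in P$ a value in $d(p)$ such that $\varphi$ evaluates to true when each atom $(p=v)$ is read as true iff $A(p)=v$; it is assumed that at least one test case exists. Fix a strength $t$ with $1\le t\le |P|$. A $t$-tuple is an assignment of values (from their domains) to exactly $t$ distinct parameters, viewed as a set of pairs $(p,v)$. A test case covers a $t$-tuple $\tau$ if it assigns $v$ to $p$ for every $(p,v)\in\tau$. A $t$-tuple is allowed if some test case covers it; $\mathcal{T}_a$ denotes the set of allowed $t$-tuples. A covering array $CA(N;t,S)$ is a list of $N$ test cases (repetitions allowed) such that every allowed $t$-tuple is covered by at least one of them. Write $[N]=\{1,\dots,N\}$. Propositional variables: $x_{i,p,v}$ for $i\in[N]$, $p\in P$, $v\in d(p)$, and $c^i_\tau$ for $i\in\{0,1,\dots,N\}$, $\tau\in\mathcal T_a$. Constraints (each read as a Boolean constraint; any satisfiability-preserving CNF translation may be used): (X) for every $i\in[N]$ and $p\in P$: exactly one of $\{x_{i,p,v}: v\in d(p)\}$ is true; (SUTX) for every $i\in[N]$: the formula obtained from $\varphi$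 by replacing every atom $(p=v)$ with $x_{i,p,v}$; (CCX) consisting of (a) for every $i\in[N]$, $\tau\in\mathcal T_a$, $(p,v)\in\tau$: $c^i_\tau\rightarrow (c^{i-1}_\tau\vee x_{i,p,v})$; (b) for every $\tau\in\mathcal T_a$ the unit clause $c^N_\tau$; (c) for every $\tau\in\mathcal T_a$: $c^N_\tau\rightarrow\neg c^0_\tau$. *)

theory Defs
  imports Main
begin

datatype 'a form =
    Atom 'a
  | TT
  | FF
  | Neg "'a form"
  | Conj "'a form" "'a form"
  | Disj "'a form" "'a form"
  | Impl "'a form" "'a form"
  | Iff "'a form" "'a form"

fun eval :: "('a \<Rightarrow> bool) \<Rightarrow> 'a form \<Rightarrow> bool" where
  "eval s (Atom a) = s a"
| "eval s TT = True"
| "eval s FF = False"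
| "eval s (Neg f) = (\<not> eval s f)"
| "eval s (Conj f g) = (eval s f \<and> eval s g)"
| "eval s (Disj f g) = (eval s f \<or> eval s g)"
| "eval s (Impl f g) = (eval s f \<longrightarrow> eval s g)"
| "eval s (Iff f g) = (eval s f \<longleftrightarrow> eval s g)"

fun atoms :: "'a form \<Rightarrow> 'a set" where
  "atoms (Atom a) = {a}"
| "atoms TT = {}"
| "atoms FF = {}"
| "atoms (Neg f) = atoms f"
| "atoms (Conj f g) = atoms f \<union> atoms g"
| "atoms (Disj f g) = atoms f \<union> atoms g"
| "atoms (Impl f g) = atoms f \<union> atoms g"
| "atoms (Iff f g) = atoms f \<union> atoms g"

text \<open>A SUT model: parameters P, domains d, constraint phi whose atoms (p,v) stand for (p = v).\<close>
definition sut_model :: "'p set \<Rightarrow> ('p \<Rightarrow> 'v set) \<Rightarrow> ('p \<times> 'v) form \<Rightarrow> bool" where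
  "sut_model P d \<phi> \<longleftrightarrow> finite P \<and> (\<forall>p\<in>P. finite (d p) \<and> d p \<noteq> {})
     \<and> atoms \<phi> \<subseteq> {(p, v). p \<in> P \<and> v \<in> d p}"

text \<open>A test case: a full assignment of values (only its values on P matter) satisfying phi.\<close>
definition test_case :: "'p set \<Rightarrow> ('p \<Rightarrow> 'v set) \<Rightarrow> ('p \<times> 'v) form \<Rightarrow> ('p \<Rightarrow> 'v) \<Rightarrow> bool" where
  "test_case P d \<phi> A \<longleftrightarrow> (\<forall>p\<in>P. A p \<in> d p) \<and> eval (\<lambda>(p, v). A p = v) \<phi>"

definition t_tuple :: "'p set \<Rightarrow> ('p \<Rightarrow> 'v set) \<Rightarrow> nat \<Rightarrow> ('p \<times> 'v) set \<Rightarrow> bool" where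
  "t_tuple P d t \<tau> \<longleftrightarrow> finite \<tau> \<and> card \<tau> = t \<and> (\<forall>(p, v)\<in>\<tau>. p \<in> P \<and> v \<in> d p)
     \<and> (\<forall>(p, v)\<in>\<tau>. \<forall>(p', v')\<in>\<tau>. p = p' \<longrightarrow> v = v')"

definition covers :: "('p \<Rightarrow> 'v) \<Rightarrow> ('p \<times> 'v) set \<Rightarrow> bool" where
  "covers A \<tau> \<longleftrightarrow> (\<forall>(p, v)\<in>\<tau>. A p = v)"

definition allowed_tuples :: "'p set \<Rightarrow> ('p \<Rightarrow> 'v set) \<Rightarrow> ('p \<times> 'v) form \<Rightarrow> nat \<Rightarrow> ('p \<times> 'v) set set" where
  "allowed_tuples P d \<phi> t = {\<tau>. t_tuple P d t \<tau> \<and> (\<exists>A. test_case P d \<phi> A \<and> covers A \<tau>)}"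

definition covering_array :: "nat \<Rightarrow> nat \<Rightarrow> 'p set \<Rightarrow> ('p \<Rightarrow> 'v set) \<Rightarrow> ('p \<times> 'v) form \<Rightarrow> ('p \<Rightarrow> 'v) list \<Rightarrow> bool" where
  "covering_array N t P d \<phi> As \<longleftrightarrow> length As = N \<and> (\<forall>A\<in>set As. test_case P d \<phi> A)
     \<and> (\<forall>\<tau>\<in>allowed_tuples P d \<phi> t. \<exists>A\<in>set As. covers A \<tau>)"

datatype ('p, 'v) encvar = X nat 'p 'v | C nat "('p \<times> 'v) set"

definition constr_X :: "nat \<Rightarrow> 'p set \<Rightarrow> ('p \<Rightarrow> 'v set) \<Rightarrow> (('p, 'v) encvar \<Rightarrow> bool) \<Rightarrow> bool" where
  "constr_X N P d \<sigma> \<longleftrightarrow> (\<forall>i\<in>{1..N}. \<forall>p\<in>P. \<exists>!v. v \<in> d p \<and> \<sigma> (X i p v))"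

definition constr_SUTX :: "nat \<Rightarrow> ('p \<times> 'v) form \<Rightarrow> (('p, 'v) encvar \<Rightarrow> bool) \<Rightarrow> bool" where
  "constr_SUTX N \<phi> \<sigma> \<longleftrightarrow> (\<forall>i\<in>{1..N}. eval \<sigma> (map_form (\<lambda>(p, v). X i p v) \<phi>))"

definition constr_CCX :: "nat \<Rightarrow> nat \<Rightarrow> 'p set \<Rightarrow> ('p \<Rightarrow> 'v set) \<Rightarrow> ('p \<times> 'v) form
    \<Rightarrow> (('p, 'v) encvar \<Rightarrow> bool) \<Rightarrow> bool" where
  "constr_CCX N t P d \<phi> \<sigma> \<longleftrightarrow>
     (\<forall>i\<in>{1..N}. \<forall>\<tau>\<in>allowed_tuples P d \<phi> t. \<forall>(p, v)\<in>\<tau>.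
         \<sigma> (C i \<tau>) \<longrightarrow> (\<sigma> (C (i - 1) \<tau>) \<or> \<sigma> (X i p v)))
   \<and> (\<forall>\<tau>\<in>allowed_tuples P d \<phi> t. \<sigma> (C N \<tau>))
   \<and> (\<forall>\<tau>\<in>allowed_tuples P d \<phi> t. \<sigma> (C N \<tau>) \<longrightarrow> \<not> \<sigma> (C 0 \<tau>))"

definition Sat_CCX :: "nat \<Rightarrow> nat \<Rightarrow> 'p set \<Rightarrow> ('p \<Rightarrow> 'v set) \<Rightarrow> ('p \<times> 'v) form
    \<Rightarrow> (('p, 'v) encvar \<Rightarrow> bool) \<Rightarrow> bool" where
  "Sat_CCX N t P d \<phi> \<sigma> \<longleftrightarrow> constr_X N P d \<sigma> \<and> constr_CCX N t P d \<phi> \<sigma> \<and> constr_SUTX N \<phi> \<sigma>"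

definition satisfiable_Sat_CCX :: "nat \<Rightarrow> nat \<Rightarrow> 'p set \<Rightarrow> ('p \<Rightarrow> 'v set) \<Rightarrow> ('p \<times> 'v) form \<Rightarrow> bool" where
  "satisfiable_Sat_CCX N t P d \<phi> \<longleftrightarrow> (\<exists>\<sigma>. Sat_CCX N t P d \<phi> \<sigma>)"

end

theory Submission
  imports Defs
begin

text \<open>Reading row i of the array off the variables x_{i,p,v} turns every model of the
  encoding into a covering array: (SUTX) makes each row a test case and, for an allowed
  tuple, the chain c^0 = False, ..., c^N = True must switch on at some row i, where (CCX a)
  forces row i to cover the tuple. Conversely a covering array is encoded by letting c^i_tau
  say that one of the first i rows covers tau.\<close>

lemma eval_map_form: "eval s (map_form f \<phi>) = eval (s \<circ> f) \<phi>"
  by (induction \<phi>) auto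

lemma eval_cong_atoms: "(\<And>a. a \<in> atoms \<phi> \<Longrightarrow> s a = s' a) \<Longrightarrow> eval s \<phi> = eval s' \<phi>"
  by (induction \<phi>) auto

lemma test_case_iff_eval_row:
  assumes "sut_model P d \<phi>" and "\<forall>p\<in>P. A p \<in> d p"
    and "\<And>p v. p \<in> P \<Longrightarrow> v \<in> d p \<Longrightarrow> \<sigma> (X i p v) \<longleftrightarrow> A p = v"
  shows "test_case P d \<phi> A \<longleftrightarrow> eval \<sigma> (map_form (\<lambda>(p, v). X i p v) \<phi>)"
proof -
  have "eval (\<lambda>(p, v). A p = v) \<phi> = eval (\<sigma> \<circ> (\<lambda>(p, v). X i p v)) \<phi>"
  proof (rule eval_cong_atoms)
    fix a assume "a \<in> atoms \<phi>"
    then show "(\<lambda>(p, v). A p = v) a = (\<sigma> \<circ> (\<lambda>(p, v). X i p v)) a"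
      using assms(1,3) unfolding sut_model_def by auto
  qed
  then show ?thesis
    using assms(2) unfolding test_case_def by (simp add: eval_map_form)
qed

definition decode_row :: "('p \<Rightarrow> 'v set) \<Rightarrow> (('p, 'v) encvar \<Rightarrow> bool) \<Rightarrow> nat \<Rightarrow> 'p \<Rightarrow> 'v" where
  "decode_row d \<sigma> i p = (THE v. v \<in> d p \<and> \<sigma> (X i p v))"

definition decode :: "nat \<Rightarrow> ('p \<Rightarrow> 'v set) \<Rightarrow> (('p, 'v) encvar \<Rightarrow> bool) \<Rightarrow> ('p \<Rightarrow> 'v) list" where
  "decode N d \<sigma> = map (decode_row d \<sigma>) [1..<Suc N]"

lemma decode_row_in_dom:
  assumes "constr_X N P d \<sigma>" "i \<in> {1..N}" "p \<in> P"
  shows "decode_row d \<sigma> i p \<in> d p"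
  using assms theI'[of "\<lambda>v. v \<in> d p \<and> \<sigma> (X i p v)"]
  unfolding constr_X_def decode_row_def by blast

lemma X_iff_decode_row:
  assumes "constr_X N P d \<sigma>" "i \<in> {1..N}" "p \<in> P" "v \<in> d p"
  shows "\<sigma> (X i p v) \<longleftrightarrow> decode_row d \<sigma> i p = v"
  using assms the1_equality[of "\<lambda>v. v \<in> d p \<and> \<sigma> (X i p v)" v]
    decode_row_in_dom[OF assms(1-3)] theI'[of "\<lambda>v. v \<in> d p \<and> \<sigma> (X i p v)"]
  unfolding constr_X_def decode_row_def by blast

lemma test_case_decode_row:
  assumes "sut_model P d \<phi>" "constr_X N P d \<sigma>" "constr_SUTX N \<phi> \<sigma>" "i \<in> {1..N}"
  shows "test_case P d \<phi> (decode_row d \<sigma> i)"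
proof (subst test_case_iff_eval_row[OF assms(1)])
  show "\<forall>p\<in>P. decode_row d \<sigma> i p \<in> d p"
    using decode_row_in_dom[OF assms(2,4)] by blast
  show "\<sigma> (X i p v) \<longleftrightarrow> decode_row d \<sigma> i p = v" if "p \<in> P" "v \<in> d p" for p v
    using X_iff_decode_row[OF assms(2,4) that] .
  show "eval \<sigma> (map_form (\<lambda>(p, v). X i p v) \<phi>)"
    using assms(3,4) unfolding constr_SUTX_def by blast
qed

lemma allowed_tuple_covered_by_decode_row:
  assumes "constr_X N P d \<sigma>" "constr_CCX N t P d \<phi> \<sigma>" and \<tau>: "\<tau> \<in> allowed_tuples P d \<phi> t"
  shows "\<exists>i\<in>{1..N}. covers (decode_row d \<sigma> i) \<tau>"
proof -
  have "\<sigma> (C N \<tau>)" "\<not> \<sigma> (C 0 \<tau>)"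
    using assms(2) \<tau> unfolding constr_CCX_def by auto
  then obtain k where k: "k < N" "\<not> \<sigma> (C k \<tau>)" "\<sigma> (C (Suc k) \<tau>)"
    using ex_least_nat_less[of "\<lambda>i. \<sigma> (C i \<tau>)" N] by blast
  have "covers (decode_row d \<sigma> (Suc k)) \<tau>"
    unfolding covers_def
  proof clarify
    fix p v assume pv: "(p, v) \<in> \<tau>"
    then have "\<sigma> (X (Suc k) p v)"
      using assms(2) \<tau> k unfolding constr_CCX_def by fastforce
    moreover have "p \<in> P" "v \<in> d p"
      using \<tau> pv unfolding allowed_tuples_def t_tuple_def by auto
    ultimately show "decode_row d \<sigma> (Suc k) p = v"
      using X_iff_decode_row[OF assms(1)] k(1) by simp
  qed
  then show ?thesis using k(1) by force
qed

lemma covering_array_decode: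
  assumes "sut_model P d \<phi>" "Sat_CCX N t P d \<phi> \<sigma>"
  shows "covering_array N t P d \<phi> (decode N d \<sigma>)"
proof -
  have X: "constr_X N P d \<sigma>" and CCX: "constr_CCX N t P d \<phi> \<sigma>" and SUTX: "constr_SUTX N \<phi> \<sigma>"
    using assms(2) unfolding Sat_CCX_def by auto
  have rows: "set (decode N d \<sigma>) = decode_row d \<sigma> ` {1..N}"
    unfolding decode_def by auto
  show ?thesis
    unfolding covering_array_def rows
    using test_case_decode_row[OF assms(1) X SUTX] allowed_tuple_covered_by_decode_row[OF X CCX]
    by (auto simp: decode_def)
qed

fun encode :: "('p \<Rightarrow> 'v) list \<Rightarrow> ('p, 'v) encvar \<Rightarrow> bool" where
  "encode As (X i p v) \<longleftrightarrow> (As ! (i - 1)) p = v"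
| "encode As (C i \<tau>) \<longleftrightarrow> (\<exists>A\<in>set (take i As). covers A \<tau>)"

lemma test_case_nth:
  assumes "covering_array N t P d \<phi> As" "i \<in> {1..N}"
  shows "test_case P d \<phi> (As ! (i - 1))"
  using assms unfolding covering_array_def by auto

lemma constr_X_encode:
  assumes "covering_array N t P d \<phi> As"
  shows "constr_X N P d (encode As)"
  using test_case_nth[OF assms] unfolding constr_X_def test_case_def by auto

lemma constr_SUTX_encode:
  assumes "sut_model P d \<phi>" "covering_array N t P d \<phi> As"
  shows "constr_SUTX N \<phi> (encode As)"
  unfolding constr_SUTX_def
proof
  fix i assume "i \<in> {1..N}"
  then have "test_case P d \<phi> (As ! (i - 1))"
    using test_case_nth[OF assms(2)] by blast
  then show "eval (encode As) (map_form (\<lambda>(p, v). X i p v) \<phi>)"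
    using test_case_iff_eval_row[OF assms(1), of "As ! (i - 1)" "encode As" i]
    unfolding test_case_def by simp
qed

lemma constr_CCX_encode:
  assumes "covering_array N t P d \<phi> As"
  shows "constr_CCX N t P d \<phi> (encode As)"
proof -
  have N: "length As = N" and cov: "\<forall>\<tau>\<in>allowed_tuples P d \<phi> t. \<exists>A\<in>set As. covers A \<tau>"
    using assms unfolding covering_array_def by auto
  have chain: "encode As (C i \<tau>) \<longrightarrow> encode As (C (i - 1) \<tau>) \<or> encode As (X i p v)"
    if "i \<in> {1..N}" "(p, v) \<in> \<tau>" for i \<tau> p v
  proof -
    have "set (take i As) = insert (As ! (i - 1)) (set (take (i - 1) As))"
      using that(1) N take_Suc_conv_app_nth[of "i - 1" As] by auto
    then show ?thesis
      using that(2) by (auto simp: covers_def)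
  qed
  show ?thesis
    unfolding constr_CCX_def
  proof (intro conjI ballI)
    fix i \<tau> pv assume "i \<in> {1..N}" "\<tau> \<in> allowed_tuples P d \<phi> t" "pv \<in> \<tau>"
    then show "case pv of (p, v) \<Rightarrow>
        encode As (C i \<tau>) \<longrightarrow> encode As (C (i - 1) \<tau>) \<or> encode As (X i p v)"
      using chain by (cases pv) simp
  next
    fix \<tau> assume "\<tau> \<in> allowed_tuples P d \<phi> t"
    then show "encode As (C N \<tau>)"
      using N cov by simp
  qed simp
qed

theorem proposition2:
  fixes P :: "'p set" and d :: "'p \<Rightarrow> 'v set" and \<phi> :: "('p \<times> 'v) form"
    and t N :: nat
  assumes "sut_model P d \<phi>"
    and "\<exists>A. test_case P d \<phi> A"
    and "1 \<le> t" and "t \<le> card P"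
    and "N \<ge> 1"
  shows "satisfiable_Sat_CCX N t P d \<phi> \<longleftrightarrow> (\<exists>As. covering_array N t P d \<phi> As)"
proof
  assume "satisfiable_Sat_CCX N t P d \<phi>"
  then show "\<exists>As. covering_array N t P d \<phi> As"
    using covering_array_decode[OF assms(1)] unfolding satisfiable_Sat_CCX_def by blast
next
  assume "\<exists>As. covering_array N t P d \<phi> As"
  then obtain As where "covering_array N t P d \<phi> As" ..
  then have "Sat_CCX N t P d \<phi> (encode As)"
    using constr_X_encode constr_SUTX_encode[OF assms(1)] constr_CCX_encode
    unfolding Sat_CCX_def by blast
  then show "satisfiable_Sat_CCX N t P d \<phi>"
    unfolding satisfiable_Sat_CCX_def by blast
qed

end
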